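(* Let $R=k[x_1,x_2,x_3]$ and let $I$ be a homogeneous $\mathfrak m$-primary ideal of $R$. If some minimal generator of $I$ of degree $n$ equals $\ell s$ for a linear form $\ell$ and a socle generator $s$ for $I$, then $\beta_{2,n+1}(R/I)\ge2$.
   Context: $k$ is a field, $R$ has the standard grading, $\mathfrak m=(x_1,x_2,x_3)$, and $\beta_{i,j}(R/I)=\dim_k\operatorname{Tor}_i^R(R/I,k)_j$. The socle of $R/I$ is $(I:\mathfrak m)/I$; homogeneous elements $s_1,\dots,s_r\in R$ are socle generators for $I$ if their images minimally generate the socle of $R/I$. *)

theory Defs
  imports Main "HOL.Vector_Spaces" "HOL-Library.Poly_Mapping" "HOL-Library.Product_Plus" "HOL-Library.Function_Algebras"
begin

text \<open>The polynomial ring R = k[x_1,x_2,x_3]: finitely supported maps from exponent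
  vectors (a,b,c) (standing for x_1^a x_2^b x_3^c) to coefficients in k.
  The variables x_1,x_2,x_3 are indexed 0,1,2.\<close>

type_synonym 'k poly3 = "(nat \<times> nat \<times> nat) \<Rightarrow>\<^sub>0 'k"

definition var3 :: "nat \<Rightarrow> 'k::comm_ring_1 poly3" where
  "var3 i = Poly_Mapping.single (if i = 0 then (1,0,0) else if i = 1 then (0,1,0) else (0,0,1)) 1"

definition const3 :: "'k::comm_ring_1 \<Rightarrow> 'k poly3" where
  "const3 c = Poly_Mapping.single (0,0,0) c"

definition tdeg :: "nat \<times> nat \<times> nat \<Rightarrow> nat" where
  "tdeg m = fst m + fst (snd m) + snd (snd m)"

text \<open>Homogeneous of (integer) degree d in the standard grading (0 is homogeneous of every degree).\<close>
definition homog :: "int \<Rightarrow> 'k::comm_ring_1 poly3 \<Rightarrow> bool" where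
  "homog d p \<longleftrightarrow> (\<forall>m \<in> Poly_Mapping.keys p. int (tdeg m) = d)"

definition is_homog :: "'k::comm_ring_1 poly3 \<Rightarrow> bool" where
  "is_homog p \<longleftrightarrow> (\<exists>d. homog d p)"

definition is_ideal :: "'a::comm_ring_1 set \<Rightarrow> bool" where
  "is_ideal I \<longleftrightarrow> 0 \<in> I \<and> (\<forall>a\<in>I. \<forall>b\<in>I. a + b \<in> I) \<and> (\<forall>r. \<forall>a\<in>I. r * a \<in> I)"

definition ideal_gen :: "'a::comm_ring_1 set \<Rightarrow> 'a set" where
  "ideal_gen G = \<Inter>{J. is_ideal J \<and> G \<subseteq> J}"

definition homog_ideal :: "'k::comm_ring_1 poly3 set \<Rightarrow> bool" where
  "homog_ideal I \<longleftrightarrow> is_ideal I \<and> (\<exists>G. (\<forall>g\<in>G. is_homog g) \<and> I = ideal_gen G)"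

definition max_ideal3 :: "'k::comm_ring_1 poly3 set" where
  "max_ideal3 = ideal_gen {var3 0, var3 1, var3 2}"

definition radical :: "'a::comm_ring_1 set \<Rightarrow> 'a set" where
  "radical I = {a. \<exists>n. a ^ n \<in> I}"

definition primary_ideal :: "'a::comm_ring_1 set \<Rightarrow> bool" where
  "primary_ideal I \<longleftrightarrow> is_ideal I \<and> I \<noteq> UNIV \<and>
     (\<forall>a b. a * b \<in> I \<longrightarrow> a \<in> I \<or> b \<in> radical I)"

definition m_primary :: "'k::comm_ring_1 poly3 set \<Rightarrow> bool" where
  "m_primary I \<longleftrightarrow> primary_ideal I \<and> radical I = max_ideal3"

definition minimal_generator :: "'k::comm_ring_1 poly3 set \<Rightarrow> 'k poly3 \<Rightarrow> bool" where
  "minimal_generator I f \<longleftrightarrow> (\<exists>G. finite G \<and> (\<forall>g\<in>G. is_homog g) \<and> I = ideal_gen G \<and>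
      (\<forall>g\<in>G. g \<notin> ideal_gen (G - {g})) \<and> f \<in> G)"

definition colon_m :: "'k::comm_ring_1 poly3 set \<Rightarrow> 'k poly3 set" where
  "colon_m I = {a. \<forall>x\<in>max_ideal3. x * a \<in> I}"

text \<open>s is a socle generator for I: s belongs to a set S of homogeneous elements whose
  images minimally generate the socle (I:m)/I of R/I, i.e. I + (S) = (I:m) and no
  element of S is redundant modulo I.\<close>
definition socle_generator :: "'k::comm_ring_1 poly3 set \<Rightarrow> 'k poly3 \<Rightarrow> bool" where
  "socle_generator I s \<longleftrightarrow> (\<exists>S. finite S \<and> (\<forall>t\<in>S. is_homog t) \<and> S \<subseteq> colon_m I \<and>
      ideal_gen (I \<union> S) = colon_m I \<and> (\<forall>t\<in>S. t \<notin> ideal_gen (I \<union> (S - {t}))) \<and> s \<in> S)"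

text \<open>Tor_i^R(R/I,k) is computed as the homology of (R/I) \<otimes> K, where K is the Koszul
  complex on x_1,x_2,x_3, a graded free resolution of k.  A chain of K_i \<otimes> R is a function
  from i-element subsets T of {0,1,2} (basis e_T of degree |T|) to R; its degree-j part
  has coefficients homogeneous of degree j - |T|.\<close>

definition kchains :: "nat \<Rightarrow> int \<Rightarrow> (nat set \<Rightarrow> 'k::comm_ring_1 poly3) set" where
  "kchains i j = {a. (\<forall>T. a T \<noteq> 0 \<longrightarrow> T \<subseteq> {0,1,2} \<and> card T = i) \<and>
                     (\<forall>T. homog (j - int i) (a T))}"

definition kdiff :: "nat \<Rightarrow> (nat set \<Rightarrow> 'k::comm_ring_1 poly3) \<Rightarrow> (nat set \<Rightarrow> 'k poly3)" where
  "kdiff i a = (\<lambda>T. if T \<subseteq> {0,1,2} \<and> card T = i then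
      (\<Sum>u\<in>{0,1,2} - T. (-1) ^ card {t\<in>T. t < u} * var3 u * a (insert u T)) else 0)"

text \<open>Cycles of (R/I) \<otimes> K in homological degree i and internal degree j, lifted to R.\<close>
definition kcycles :: "'k::comm_ring_1 poly3 set \<Rightarrow> nat \<Rightarrow> int \<Rightarrow> (nat set \<Rightarrow> 'k poly3) set" where
  "kcycles I i j = {a \<in> kchains i j. i = 0 \<or> (\<forall>T. kdiff (i - 1) a T \<in> I)}"

text \<open>Boundaries of (R/I) \<otimes> K, lifted to R (together with everything congruent to 0 mod I).\<close>
definition kbounds :: "'k::comm_ring_1 poly3 set \<Rightarrow> nat \<Rightarrow> int \<Rightarrow> (nat set \<Rightarrow> 'k poly3) set" where
  "kbounds I i j = {a \<in> kchains i j. \<exists>b \<in> kchains (i + 1) j. \<forall>T. a T - kdiff i b T \<in> I}"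

definition cscale :: "'k::field \<Rightarrow> (nat set \<Rightarrow> 'k poly3) \<Rightarrow> (nat set \<Rightarrow> 'k poly3)" where
  "cscale c a = (\<lambda>T. const3 c * a T)"

text \<open>beta_{i,j}(R/I) = dim_k Tor_i^R(R/I,k)_j = dim (cycles / boundaries).\<close>
definition betti :: "'k::field poly3 set \<Rightarrow> nat \<Rightarrow> int \<Rightarrow> nat" where
  "betti I i j = vector_space.dim cscale (kcycles I i j) - vector_space.dim cscale (kbounds I i j)"

end

theory Submission
  imports Defs
begin

(*
  Let G be a minimal system of homogeneous generators of I containing f = l s, and let J be
  generated by G - {f}. As deg f = n, the degree-n part of every element of m I lies in J,
  whereas f itself does not.

  Tor_2(R/I,k)_(n+1) is the homology of the Koszul complex of x_1,x_2,x_3 tensored with R/I.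
  Since x_i s lies in I, each s e_T with |T| = 2 is a cycle. If the chain with coefficients
  +-gamma_w s at e_({0,1,2} - {w}) is a boundary d(beta e_012) mod I, then gamma_w s = x_w beta
  mod I for all w, and
    gamma_b x_a s - gamma_a x_b s = x_a (gamma_b s - x_b beta) - x_b (gamma_a s - x_a beta)
  has its degree-n part in J. Two non-proportional such gamma would put the degree-n part of
  every x_a s, hence of l s = f, into J. So the coefficient vectors of such boundaries span at
  most a line, some coordinate u does not vanish on it, and the two cycles s e_T with u in T
  are linearly independent modulo boundaries.
*)

lemma const3_mult: "const3 (a * b) = const3 a * const3 b"
  by (simp add: const3_def mult_single)

lemma const3_add: "const3 (a + b) = const3 a + const3 b"
  by (simp add: const3_def single_add)

lemma const3_diff: "const3 (a - b) = const3 a - const3 b"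
  by (simp add: const3_def single_diff)

lemma const3_one [simp]: "const3 1 = 1"
  unfolding const3_def by (metis single_one zero_prod_def)

lemma const3_uminus: "const3 (- a) = - const3 a"
  by (simp add: const3_def single_uminus)

lemma const3_power: "const3 (a ^ k) = const3 a ^ k"
  by (induction k) (simp_all add: const3_mult)

lemma const3_mult_single: "const3 c * Poly_Mapping.single m d = Poly_Mapping.single m (c * d)"
  by (cases m) (simp add: const3_def mult_single)

lemma const3_inverse_cancel: "c \<noteq> 0 \<Longrightarrow> const3 (inverse c) * (const3 c * p) = (p :: 'k::field poly3)"
  by (simp add: mult.assoc[symmetric] const3_mult[symmetric])

lemma tdeg_add: "tdeg (a + b) = tdeg a + tdeg b"
  by (cases a; cases b) (simp add: tdeg_def)

lemma homog_zero: "homog d 0"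
  by (simp add: homog_def)

lemma homog_add: "homog d p \<Longrightarrow> homog d q \<Longrightarrow> homog d (p + q)"
  unfolding homog_def using keys_add[of p q] by blast

lemma homog_sum: "(\<And>x. x \<in> A \<Longrightarrow> homog d (f x)) \<Longrightarrow> homog d (\<Sum>x\<in>A. f x)"
  by (induction A rule: infinite_finite_induct) (auto intro: homog_zero homog_add)

lemma homog_mult: "homog a p \<Longrightarrow> homog b q \<Longrightarrow> homog (a + b) (p * q)"
  unfolding homog_def
proof (intro ballI)
  fix m assume p: "\<forall>m\<in>Poly_Mapping.keys p. int (tdeg m) = a"
    and q: "\<forall>m\<in>Poly_Mapping.keys q. int (tdeg m) = b" and "m \<in> Poly_Mapping.keys (p * q)"
  then obtain u v where "m = u + v" "u \<in> Poly_Mapping.keys p" "v \<in> Poly_Mapping.keys q"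
    using keys_mult[of p q] by blast
  then show "int (tdeg m) = a + b"
    using p q by (simp add: tdeg_add)
qed

lemma homog_const3: "homog 0 (const3 c)"
  by (simp add: homog_def const3_def tdeg_def)

lemma homog_var3: "homog 1 (var3 u)"
  by (simp add: homog_def var3_def tdeg_def)

lemma homog_const3_mult: "homog d p \<Longrightarrow> homog d (const3 c * p)"
  using homog_mult[OF homog_const3] by fastforce

lemma is_homog_nat_degree:
  assumes "is_homog p" obtains e :: nat where "homog (int e) p"
proof (cases "p = 0")
  case True
  then show ?thesis using that homog_zero by blast
next
  case False
  obtain d where "homog d p" using assms unfolding is_homog_def by blast
  moreover obtain m where "m \<in> Poly_Mapping.keys p"
    using False by (metis all_not_in_conv keys_eq_empty)
  ultimately have "homog (int (tdeg m)) p" unfolding homog_def by auto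
  then show ?thesis using that by blast
qed

lemma homog_degree_unique: "p \<noteq> 0 \<Longrightarrow> homog d p \<Longrightarrow> homog d' p \<Longrightarrow> d = d'"
  unfolding homog_def by (metis all_not_in_conv keys_eq_empty)

lemma homog_1_linear_combination_var3:
  fixes l :: "'k::comm_ring_1 poly3"
  assumes "homog 1 l"
  shows "\<exists>c. l = (\<Sum>u<3. const3 (c u) * var3 u)"
proof -
  define c where "c u = Poly_Mapping.lookup l (if u = 0 then (1,0,0) else if u = 1 then (0,1,0) else (0,0,1))" for u :: nat
  have "l = (\<Sum>u<3. const3 (c u) * var3 u)"
  proof (rule poly_mapping_eqI)
    fix k :: "nat \<times> nat \<times> nat"
    have "k = (1,0,0) \<or> k = (0,1,0) \<or> k = (0,0,1) \<or> tdeg k \<noteq> 1"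
      by (cases k) (auto simp: tdeg_def)
    then show "Poly_Mapping.lookup l k = Poly_Mapping.lookup (\<Sum>u<3. const3 (c u) * var3 u) k"
    proof (elim disjE)
      assume k: "tdeg k \<noteq> 1"
      then have "k \<noteq> (1,0,0)" "k \<noteq> (0,1,0)" "k \<noteq> (0,0,1)" by (auto simp: tdeg_def)
      moreover have "Poly_Mapping.lookup l k = 0" using assms k by (auto simp: homog_def in_keys_iff)
      ultimately show ?thesis
        by (simp add: const3_def var3_def mult_single lookup_add lookup_single numeral_3_eq_3 lessThan_Suc)
    qed (simp_all add: c_def const3_def var3_def mult_single lookup_add lookup_single numeral_3_eq_3 lessThan_Suc)
  qed
  then show ?thesis by blast
qed

section \<open>Homogeneous components\<close>

definition homog_part :: "nat \<Rightarrow> 'k::comm_ring_1 poly3 \<Rightarrow> 'k poly3" where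
  "homog_part d p = Poly_Mapping.mapp (\<lambda>m c. if tdeg m = d then c else 0) p"

lemma lookup_homog_part:
  "Poly_Mapping.lookup (homog_part d p) m = (if tdeg m = d then Poly_Mapping.lookup p m else 0)"
  by (simp add: homog_part_def lookup_mapp when_def in_keys_iff)

lemma homog_part_add: "homog_part d (p + q) = homog_part d p + homog_part d q"
  by (rule poly_mapping_eqI) (simp add: lookup_homog_part lookup_add)

lemma homog_part_diff: "homog_part d (p - q) = homog_part d p - homog_part d q"
  by (rule poly_mapping_eqI) (simp add: lookup_homog_part lookup_minus)

lemma homog_part_zero [simp]: "homog_part d 0 = 0"
  by (rule poly_mapping_eqI) (simp add: lookup_homog_part)

lemma homog_part_eq_0: "(\<And>m. m \<in> Poly_Mapping.keys p \<Longrightarrow> tdeg m \<noteq> d) \<Longrightarrow> homog_part d p = 0"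
  by (rule poly_mapping_eqI) (auto simp: lookup_homog_part in_keys_iff)

lemma homog_part_homog: "homog (int d) p \<Longrightarrow> homog_part d p = p"
  by (rule poly_mapping_eqI) (auto simp: lookup_homog_part homog_def in_keys_iff)

lemma homog_homog_part: "homog (int d) (homog_part d p)"
  by (auto simp: homog_def in_keys_iff lookup_homog_part split: if_splits)

lemma homog_part_mult_homog:
  fixes r g :: "'k::comm_ring_1 poly3"
  assumes g: "homog (int e) g"
  shows "homog_part d (r * g) = (if e \<le> d then homog_part (d - e) r * g else 0)"
proof (cases "e \<le> d")
  case True
  define r' where "r' = homog_part (d - e) r"
  have "homog (int d) (r' * g)"
    using homog_mult[OF homog_homog_part[of "d - e" r] g] True unfolding r'_def by simp
  moreover have "homog_part d ((r - r') * g) = 0"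
  proof (rule homog_part_eq_0)
    fix m assume "m \<in> Poly_Mapping.keys ((r - r') * g)"
    then obtain a b where "m = a + b" "a \<in> Poly_Mapping.keys (r - r')" "b \<in> Poly_Mapping.keys g"
      using keys_mult by blast
    then show "tdeg m \<noteq> d"
      using g True by (auto simp: r'_def homog_def tdeg_add in_keys_iff lookup_minus lookup_homog_part)
  qed
  ultimately show ?thesis
    using True homog_part_add[of d "r' * g" "(r - r') * g"] homog_part_homog
    by (simp add: r'_def algebra_simps)
next
  case False
  have "homog_part d (r * g) = 0"
  proof (rule homog_part_eq_0)
    fix m assume "m \<in> Poly_Mapping.keys (r * g)"
    then obtain a b where "m = a + b" "b \<in> Poly_Mapping.keys g"
      using keys_mult by blast
    then show "tdeg m \<noteq> d"
      using g False by (auto simp: homog_def tdeg_add)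
  qed
  then show ?thesis using False by simp
qed

lemma homog_part_const3_mult: "homog_part d (const3 c * p) = const3 c * homog_part d p"
  using homog_part_mult_homog[of 0 "const3 c" d p] homog_const3[of c] by (simp add: mult.commute)

lemma ideal_gen_is_ideal: "is_ideal (ideal_gen G)"
  unfolding ideal_gen_def is_ideal_def by auto

lemma ideal_gen_superset: "G \<subseteq> ideal_gen G"
  unfolding ideal_gen_def by auto

lemma ideal_gen_least: "is_ideal J \<Longrightarrow> G \<subseteq> J \<Longrightarrow> ideal_gen G \<subseteq> J"
  unfolding ideal_gen_def by auto

lemma ideal_zero: "is_ideal I \<Longrightarrow> 0 \<in> I"
  unfolding is_ideal_def by auto

lemma ideal_add: "is_ideal I \<Longrightarrow> a \<in> I \<Longrightarrow> b \<in> I \<Longrightarrow> a + b \<in> I"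
  unfolding is_ideal_def by auto

lemma ideal_mult: "is_ideal I \<Longrightarrow> a \<in> I \<Longrightarrow> r * a \<in> I"
  unfolding is_ideal_def by auto

lemma ideal_diff: "is_ideal I \<Longrightarrow> a \<in> I \<Longrightarrow> b \<in> I \<Longrightarrow> a - b \<in> I"
  using ideal_add[of I a "- b"] ideal_mult[of I b "- 1"] by simp

lemma ideal_sum: "is_ideal I \<Longrightarrow> (\<And>x. x \<in> A \<Longrightarrow> f x \<in> I) \<Longrightarrow> sum f A \<in> I"
  by (induction A rule: infinite_finite_induct) (auto intro: ideal_zero ideal_add)

lemma homog_part_mult_ideal_gen_Diff:
  fixes G :: "'k::comm_ring_1 poly3 set"
  assumes hom: "\<forall>g\<in>G. is_homog g" and f: "homog (int n) f"
    and h: "homog (int e) h" "0 < e" and i: "i \<in> ideal_gen G"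
  shows "homog_part n (h * i) \<in> ideal_gen (G - {f})"
proof -
  let ?J = "ideal_gen (G - {f})"
  let ?S = "{i. \<forall>r. homog_part n (h * r * i) \<in> ?J}"
  have J: "is_ideal ?J" by (rule ideal_gen_is_ideal)
  have "is_ideal ?S"
    unfolding is_ideal_def
  proof (intro conjI ballI allI)
    show "0 \<in> ?S" using ideal_zero[OF J] by simp
  next
    fix a b assume "a \<in> ?S" "b \<in> ?S"
    then show "a + b \<in> ?S" using ideal_add[OF J] by (simp add: distrib_left homog_part_add)
  next
    fix r a assume "a \<in> ?S"
    have "h * r' * (r * a) = h * (r' * r) * a" for r' by (simp add: ac_simps)
    with \<open>a \<in> ?S\<close> show "r * a \<in> ?S" by (simp only: mem_Collect_eq) metis
  qed
  moreover have "g \<in> ?S" if g: "g \<in> G" for g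
  proof (intro CollectI allI)
    fix r
    show "homog_part n (h * r * g) \<in> ?J"
    proof (cases "g = f")
      case True
      have "homog_part 0 (r * h) = 0" using homog_part_mult_homog[OF h(1)] h(2) by simp
      then have "homog_part n (h * r * g) = 0"
        using True homog_part_mult_homog[OF f, of n "h * r"] by (simp add: mult.commute)
      then show ?thesis using ideal_zero[OF J] by simp
    next
      case False
      obtain e' where e': "homog (int e') g" using hom g by (meson is_homog_nat_degree)
      have "g \<in> ?J" using False g ideal_gen_superset[of "G - {f}"] by blast
      then show ?thesis
        using homog_part_mult_homog[OF e'] ideal_mult[OF J] ideal_zero[OF J] by simp
    qed
  qed
  ultimately have "ideal_gen G \<subseteq> ?S" by (intro ideal_gen_least) auto
  then have "homog_part n (h * 1 * i) \<in> ?J" using i by blast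
  then show ?thesis by simp
qed

lemma minimal_generator_separating_ideal:
  fixes I :: "'k::comm_ring_1 poly3 set"
  assumes "minimal_generator I f" and f: "homog (int n) f"
  obtains J where "is_ideal J" "\<And>u i. i \<in> I \<Longrightarrow> homog_part n (var3 u * i) \<in> J" "f \<notin> J"
proof -
  obtain G where G: "\<forall>g\<in>G. is_homog g" "I = ideal_gen G" "\<forall>g\<in>G. g \<notin> ideal_gen (G - {g})" "f \<in> G"
    using assms(1) unfolding minimal_generator_def by blast
  show ?thesis
  proof (rule that[of "ideal_gen (G - {f})"])
    show "is_ideal (ideal_gen (G - {f}))" by (rule ideal_gen_is_ideal)
    show "f \<notin> ideal_gen (G - {f})" using G(3,4) by blast
    fix u i assume "i \<in> I"
    have "homog (int 1) (var3 u)" using homog_var3 by simp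
    from homog_part_mult_ideal_gen_Diff[OF G(1) f this] show "homog_part n (var3 u * i) \<in> ideal_gen (G - {f})"
      using \<open>i \<in> I\<close> G(2) by simp
  qed
qed

lemma homog_right_factor:
  assumes "p * q \<noteq> 0" "homog a p" "is_homog q" "homog b (p * q)"
  shows "homog (b - a) q"
proof -
  obtain d where d: "homog d q" using assms(3) unfolding is_homog_def by blast
  have "a + d = b" by (rule homog_degree_unique[OF assms(1) homog_mult[OF assms(2) d] assms(4)])
  then have "d = b - a" by simp
  then show ?thesis using d by simp
qed

lemma socle_generatorD:
  assumes "socle_generator I s"
  shows "var3 u * s \<in> I" and "is_homog s"
proof -
  obtain S where "\<forall>t\<in>S. is_homog t" "S \<subseteq> colon_m I" "s \<in> S"
    using assms unfolding socle_generator_def by blast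
  then show "var3 u * s \<in> I" and "is_homog s"
    using ideal_gen_superset[of "{var3 0, var3 1, var3 2}"] unfolding colon_m_def max_ideal3_def
    by (auto simp: var3_def)
qed

section \<open>Socle relations\<close>

definition socle_relation :: "'k::comm_ring_1 poly3 set \<Rightarrow> 'k poly3 \<Rightarrow> (nat \<Rightarrow> 'k) \<Rightarrow> bool" where
  "socle_relation I s \<gamma> \<longleftrightarrow> (\<exists>\<beta>. \<forall>w<3. const3 (\<gamma> w) * s - var3 w * \<beta> \<in> I)"

lemma socle_relation_cross_term:
  assumes J: "is_ideal J" and I_to_J: "\<And>u i. i \<in> I \<Longrightarrow> homog_part n (var3 u * i) \<in> J"
    and \<gamma>: "socle_relation I s \<gamma>" and "a < 3" "b < 3"
  shows "homog_part n (const3 (\<gamma> b) * (var3 a * s) - const3 (\<gamma> a) * (var3 b * s)) \<in> J"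
proof -
  obtain \<beta> where \<beta>: "\<And>w. w < 3 \<Longrightarrow> const3 (\<gamma> w) * s - var3 w * \<beta> \<in> I"
    using \<gamma> unfolding socle_relation_def by blast
  have "const3 (\<gamma> b) * (var3 a * s) - const3 (\<gamma> a) * (var3 b * s)
      = var3 a * (const3 (\<gamma> b) * s - var3 b * \<beta>) - var3 b * (const3 (\<gamma> a) * s - var3 a * \<beta>)"
    by (simp add: algebra_simps)
  then show ?thesis
    using I_to_J[OF \<beta>[OF \<open>b < 3\<close>], of a] I_to_J[OF \<beta>[OF \<open>a < 3\<close>], of b]
    by (simp add: homog_part_diff ideal_diff[OF J])
qed

lemma socle_relations_proportional:
  fixes I J :: "'k::field poly3 set"
  assumes J: "is_ideal J" and I_to_J: "\<And>u i. i \<in> I \<Longrightarrow> homog_part n (var3 u * i) \<in> J"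
    and l: "homog 1 l" and ls: "homog_part n (l * s) \<notin> J"
    and \<gamma>: "socle_relation I s \<gamma>" and \<gamma>': "socle_relation I s \<gamma>'" and "u < 3" "w < 3"
  shows "\<gamma>' u * \<gamma> w = \<gamma> u * \<gamma>' w"
proof (rule ccontr)
  define D where "D = \<gamma>' u * \<gamma> w - \<gamma> u * \<gamma>' w"
  assume "\<gamma>' u * \<gamma> w \<noteq> \<gamma> u * \<gamma>' w"
  then have D: "D \<noteq> 0" by (simp add: D_def)
  define Q where "Q = {p. homog_part n p \<in> J}"
  have Q_diff: "p - q \<in> Q" and Q_add: "p + q \<in> Q" if "p \<in> Q" "q \<in> Q" for p q
    using that ideal_diff[OF J] ideal_add[OF J] by (simp_all add: Q_def homog_part_diff homog_part_add)
  have Q_scale: "const3 c * p \<in> Q" if "p \<in> Q" for c p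
    using that ideal_mult[OF J] by (simp add: Q_def homog_part_const3_mult)
  have Q_unscale: "p \<in> Q" if "const3 c * p \<in> Q" "c \<noteq> 0" for c p
    using Q_scale[OF that(1), of "inverse c"] const3_inverse_cancel[OF that(2)] by simp
  define \<sigma> where "\<sigma> t = var3 t * s" for t
  have cross: "const3 (g b) * \<sigma> a - const3 (g a) * \<sigma> b \<in> Q"
    if "socle_relation I s g" "a < 3" "b < 3" for g a b
    using socle_relation_cross_term[OF J I_to_J that] by (simp add: Q_def \<sigma>_def)
  have "const3 D * \<sigma> u = const3 (\<gamma>' u) * (const3 (\<gamma> w) * \<sigma> u - const3 (\<gamma> u) * \<sigma> w)
      - const3 (\<gamma> u) * (const3 (\<gamma>' w) * \<sigma> u - const3 (\<gamma>' u) * \<sigma> w)"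
    by (simp add: D_def const3_mult const3_diff algebra_simps)
  then have "const3 D * \<sigma> u \<in> Q"
    using cross[OF \<gamma> \<open>u < 3\<close> \<open>w < 3\<close>] cross[OF \<gamma>' \<open>u < 3\<close> \<open>w < 3\<close>] by (simp add: Q_diff Q_scale)
  then have \<sigma>u: "\<sigma> u \<in> Q" using Q_unscale D by blast
  have "const3 D * \<sigma> w = const3 (\<gamma>' w) * (const3 (\<gamma> w) * \<sigma> u - const3 (\<gamma> u) * \<sigma> w)
      - const3 (\<gamma> w) * (const3 (\<gamma>' w) * \<sigma> u - const3 (\<gamma>' u) * \<sigma> w)"
    by (simp add: D_def const3_mult const3_diff algebra_simps)
  then have "const3 D * \<sigma> w \<in> Q"
    using cross[OF \<gamma> \<open>u < 3\<close> \<open>w < 3\<close>] cross[OF \<gamma>' \<open>u < 3\<close> \<open>w < 3\<close>] by (simp add: Q_diff Q_scale)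
  then have \<sigma>w: "\<sigma> w \<in> Q" using Q_unscale D by blast
  have \<sigma>t: "\<sigma> t \<in> Q" if "t < 3" for t
  proof -
    have "const3 (g w) * \<sigma> t \<in> Q" if "socle_relation I s g" for g
      using Q_add[OF cross[OF that \<open>t < 3\<close> \<open>w < 3\<close>] Q_scale[OF \<sigma>w, of "g t"]] by simp
    moreover have "\<gamma> w \<noteq> 0 \<or> \<gamma>' w \<noteq> 0" using D by (auto simp: D_def)
    ultimately show ?thesis using \<gamma> \<gamma>' Q_unscale by blast
  qed
  obtain c where "l = (\<Sum>t<3. const3 (c t) * var3 t)" using homog_1_linear_combination_var3[OF l] by blast
  then have "l * s = (\<Sum>t<3. const3 (c t) * \<sigma> t)"
    by (simp add: \<sigma>_def sum_distrib_right mult.assoc)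
  also have "\<dots> \<in> Q" using \<sigma>t by (simp add: numeral_3_eq_3 lessThan_Suc Q_add Q_scale)
  finally show False using ls by (simp add: Q_def)
qed

lemma pairwise_proportional_vanishing_coordinate:
  fixes V :: "('a \<Rightarrow> 'k::field) set"
  assumes "A \<noteq> {}"
    and proportional: "\<And>\<gamma> \<gamma>' u w. \<gamma> \<in> V \<Longrightarrow> \<gamma>' \<in> V \<Longrightarrow> u \<in> A \<Longrightarrow> w \<in> A \<Longrightarrow> \<gamma>' u * \<gamma> w = \<gamma> u * \<gamma>' w"
  shows "\<exists>u\<in>A. \<forall>\<gamma>\<in>V. \<gamma> u = 0 \<longrightarrow> (\<forall>w\<in>A. \<gamma> w = 0)"
proof (cases "\<exists>\<gamma>0\<in>V. \<exists>u\<in>A. \<gamma>0 u \<noteq> 0")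
  case True
  then obtain \<gamma>0 u where "\<gamma>0 \<in> V" "u \<in> A" "\<gamma>0 u \<noteq> 0" by blast
  then show ?thesis using proportional[of _ \<gamma>0 u] by (metis mult_eq_0_iff)
next
  case False
  then show ?thesis using \<open>A \<noteq> {}\<close> by blast
qed

section \<open>The Koszul complex\<close>

lemma kdiff_2_complement:
  assumes "w < 3"
  shows "kdiff 2 b ({0,1,2} - {w}) = (-1) ^ w * (var3 w * b {0,1,2})"
proof -
  have "w = 0 \<or> w = 1 \<or> w = 2" using assms by auto
  moreover have "{t. t = 0 \<and> (t = 0 \<or> t = (2::nat))} = {0}" "{t. (t = 0 \<or> t = Suc 0) \<and> t < (2::nat)} = {0, 1}"
    by auto
  ultimately show ?thesis
    by (elim disjE) (simp_all add: kdiff_def insert_Diff_if insert_commute)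
qed

lemma kdiff_1_singleton:
  "kdiff 1 a {0} = - (var3 1 * a {0,1}) - var3 2 * a {0,2}"
  "kdiff 1 a {1} = var3 0 * a {0,1} - var3 2 * a {1,2}"
  "kdiff 1 a {2} = var3 0 * a {0,2} + var3 1 * a {1,2}"
proof -
  have "{0,1,2} - {0::nat} = {1,2}" "{t. t = 0 \<and> t < (2::nat)} = {0}"
    "{0,Suc 0,2} - {Suc 0} = {0::nat,2}" "{t. t = Suc 0 \<and> t < (2::nat)} = {1}"
    "{0,Suc 0,2} - {2::nat} = {0,Suc 0}" "{t. t = (2::nat) \<and> t = 0} = {}"
    by auto
  then show "kdiff 1 a {0} = - (var3 1 * a {0,1}) - var3 2 * a {0,2}"
    "kdiff 1 a {1} = var3 0 * a {0,1} - var3 2 * a {1,2}"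
    "kdiff 1 a {2} = var3 0 * a {0,2} + var3 1 * a {1,2}"
    by (simp_all add: kdiff_def insert_commute del: Collect_empty_eq)
qed

lemma kdiff_outside: "\<not> (T \<subseteq> {0,1,2} \<and> card T = i) \<Longrightarrow> kdiff i a T = 0"
  unfolding kdiff_def by (simp only: if_False)

lemma subset_012_card_1: "T \<subseteq> {0,1,2::nat} \<Longrightarrow> card T = 1 \<Longrightarrow> T = {0} \<or> T = {1} \<or> T = {2}"
  by (auto simp: card_Suc_eq)

lemma kdiff_kdiff: "kdiff 1 (kdiff 2 b) T = 0"
proof (cases "T \<subseteq> {0,1,2} \<and> card T = 1")
  case True
  have d2: "kdiff 2 b {1,2} = var3 0 * b {0,1,2}" "kdiff 2 b {0,2} = - (var3 1 * b {0,1,2})"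
    "kdiff 2 b {0,1} = var3 2 * b {0,1,2}"
    using kdiff_2_complement[of 0 b] kdiff_2_complement[of 1 b] kdiff_2_complement[of 2 b]
    by (simp_all add: insert_Diff_if insert_commute)
  from True have "T = {0} \<or> T = {1} \<or> T = {2}" by (intro subset_012_card_1) auto
  then show ?thesis
    by (elim disjE) (simp only: kdiff_1_singleton d2, simp add: algebra_simps)+
qed (rule kdiff_outside)

lemma kdiff_add: "kdiff i (a + c) T = kdiff i a T + kdiff i c T"
  by (simp add: kdiff_def sum.distrib algebra_simps)

lemma kdiff_diff: "kdiff i (a - c) T = kdiff i a T - kdiff i c T"
  by (simp add: kdiff_def sum_subtractf algebra_simps)

lemma kdiff_cscale: "kdiff i (cscale c a) T = const3 c * kdiff i a T"
  by (simp add: kdiff_def cscale_def sum_distrib_left algebra_simps)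

lemma kdiff_zero: "kdiff i 0 T = 0"
  by (simp add: kdiff_def)

lemma kdiff_in_ideal: "is_ideal I \<Longrightarrow> (\<And>u T'. var3 u * a T' \<in> I) \<Longrightarrow> kdiff i a T \<in> I"
  unfolding kdiff_def by (auto intro!: ideal_sum ideal_zero simp: mult.assoc intro: ideal_mult)

lemma kchains_zero: "0 \<in> kchains i j"
  by (simp add: kchains_def homog_zero)

lemma kchains_add: "a \<in> kchains i j \<Longrightarrow> b \<in> kchains i j \<Longrightarrow> a + b \<in> kchains i j"
proof -
  assume a: "a \<in> kchains i j" and b: "b \<in> kchains i j"
  have "T \<subseteq> {0,1,2} \<and> card T = i" if "(a + b) T \<noteq> 0" for T
  proof -
    from that have "a T \<noteq> 0 \<or> b T \<noteq> 0" by auto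
    then show ?thesis using a b unfolding kchains_def by blast
  qed
  moreover have "homog (j - int i) ((a + b) T)" for T
    using a b unfolding kchains_def by (simp add: homog_add)
  ultimately show ?thesis unfolding kchains_def by blast
qed

lemma kchains_cscale: "a \<in> kchains i j \<Longrightarrow> cscale c a \<in> kchains i j"
proof -
  assume a: "a \<in> kchains i j"
  have "T \<subseteq> {0,1,2} \<and> card T = i" if "const3 c * a T \<noteq> 0" for T
  proof -
    from that have "a T \<noteq> 0" by auto
    then show ?thesis using a unfolding kchains_def by blast
  qed
  moreover have "homog (j - int i) (const3 c * a T)" for T
    using a unfolding kchains_def by (simp add: homog_const3_mult)
  ultimately show ?thesis unfolding kchains_def cscale_def by blast
qed

interpretation cs: vector_space "cscale :: 'k::field \<Rightarrow> (nat set \<Rightarrow> 'k poly3) \<Rightarrow> _"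
  by unfold_locales (auto simp: cscale_def fun_eq_iff const3_add const3_mult algebra_simps)

lemma kbounds_subspace:
  assumes I: "is_ideal I"
  shows "cs.subspace (kbounds I i j)"
proof (rule cs.subspaceI)
  show "0 \<in> kbounds I i j"
    unfolding kbounds_def using kchains_zero ideal_zero[OF I] by (auto simp: kdiff_zero intro!: bexI[of _ 0])
next
  fix x y assume "x \<in> kbounds I i j" "y \<in> kbounds I i j"
  then obtain bx "by" where x: "x \<in> kchains i j" "bx \<in> kchains (i + 1) j" "\<And>T. x T - kdiff i bx T \<in> I"
    and y: "y \<in> kchains i j" "by \<in> kchains (i + 1) j" "\<And>T. y T - kdiff i by T \<in> I"
    unfolding kbounds_def by blast
  have "(x + y) T - kdiff i (bx + by) T = (x T - kdiff i bx T) + (y T - kdiff i by T)" for T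
    by (simp add: kdiff_add)
  then have "\<forall>T. (x + y) T - kdiff i (bx + by) T \<in> I" using ideal_add[OF I x(3) y(3)] by metis
  then show "x + y \<in> kbounds I i j"
    unfolding kbounds_def using x y kchains_add by blast
next
  fix c x assume "x \<in> kbounds I i j"
  then obtain bx where x: "x \<in> kchains i j" "bx \<in> kchains (i + 1) j" "\<And>T. x T - kdiff i bx T \<in> I"
    unfolding kbounds_def by blast
  have "cscale c x T - kdiff i (cscale c bx) T = const3 c * (x T - kdiff i bx T)" for T
    unfolding kdiff_cscale by (simp add: cscale_def right_diff_distrib)
  then have "\<forall>T. cscale c x T - kdiff i (cscale c bx) T \<in> I" using ideal_mult[OF I x(3)] by metis
  then show "cscale c x \<in> kbounds I i j"
    unfolding kbounds_def using x kchains_cscale by blast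
qed

lemma kbounds_subset_kcycles:
  assumes I: "is_ideal I"
  shows "kbounds I 2 j \<subseteq> kcycles I 2 j"
proof
  fix a assume "a \<in> kbounds I 2 j"
  then obtain b where a: "a \<in> kchains 2 j" and ab: "\<And>T. a T - kdiff 2 b T \<in> I"
    unfolding kbounds_def by blast
  have "kdiff 1 a T = kdiff 1 (a - kdiff 2 b) T + kdiff 1 (kdiff 2 b) T" for T
    by (simp add: kdiff_diff)
  then have "kdiff 1 a T = kdiff 1 (a - kdiff 2 b) T" for T
    by (simp only: kdiff_kdiff add_0_right)
  moreover have "kdiff 1 (a - kdiff 2 b) T \<in> I" for T
    by (rule kdiff_in_ideal[OF I]) (simp add: ideal_mult[OF I ab])
  ultimately show "a \<in> kcycles I 2 j" unfolding kcycles_def using a by simp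
qed

lemma sum_apply: "(\<Sum>a\<in>A. f a) x = (\<Sum>a\<in>A. f a x)"
  by (induction A rule: infinite_finite_induct) auto

lemma kchains_finite_span: "\<exists>W. finite W \<and> (kchains i j :: (nat set \<Rightarrow> 'k::field poly3) set) \<subseteq> cs.span W"
proof -
  define A where "A = Pow {0,1,2::nat} \<times> ({..nat j} \<times> {..nat j} \<times> {..nat j})"
  define e :: "nat set \<times> (nat \<times> nat \<times> nat) \<Rightarrow> nat set \<Rightarrow> 'k poly3"
    where "e p = (\<lambda>T. if T = fst p then Poly_Mapping.single (snd p) 1 else 0)" for p
  have "a \<in> cs.span (e ` A)" if a: "a \<in> kchains i j" for a
  proof -
    have support: "(T, k) \<in> A" if "Poly_Mapping.lookup (a T) k \<noteq> 0" for T k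
    proof -
      have "a T \<noteq> 0" using that by auto
      then have "T \<subseteq> {0,1,2}" using a unfolding kchains_def by blast
      moreover have "int (tdeg k) = j - int i"
        using a that unfolding kchains_def homog_def by (auto simp: in_keys_iff)
      then have "k \<in> {..nat j} \<times> {..nat j} \<times> {..nat j}" by (cases k) (auto simp: tdeg_def)
      ultimately show ?thesis unfolding A_def by simp
    qed
    have "a = (\<Sum>p\<in>A. cscale (Poly_Mapping.lookup (a (fst p)) (snd p)) (e p))"
    proof (intro ext poly_mapping_eqI)
      fix T k
      have "Poly_Mapping.lookup ((\<Sum>p\<in>A. cscale (Poly_Mapping.lookup (a (fst p)) (snd p)) (e p)) T) k
          = (\<Sum>p\<in>A. if p = (T, k) then Poly_Mapping.lookup (a T) k else 0)"
        unfolding sum_apply lookup_sum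
        by (intro sum.cong refl) (auto simp: cscale_def e_def const3_mult_single lookup_single when_def)
      also have "\<dots> = Poly_Mapping.lookup (a T) k"
        using support[of T k] by (auto simp: A_def)
      finally show "Poly_Mapping.lookup (a T) k
          = Poly_Mapping.lookup ((\<Sum>p\<in>A. cscale (Poly_Mapping.lookup (a (fst p)) (snd p)) (e p)) T) k" ..
    qed
    also have "\<dots> \<in> cs.span (e ` A)"
      by (intro cs.span_sum cs.span_scale cs.span_base imageI)
    finally show ?thesis .
  qed
  moreover have "finite (e ` A)" unfolding A_def by simp
  ultimately show ?thesis by blast
qed

lemma (in vector_space) dim_add_two_le:
  assumes B: "subspace B" and BZ: "B \<subseteq> Z" and ZW: "Z \<subseteq> span W" and W: "finite W"
    and z1: "z1 \<in> Z" "z1 \<notin> B" and z2: "z2 \<in> Z" "\<And>c. z2 - c *s z1 \<notin> B"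
  shows "dim B + 2 \<le> dim Z"
proof -
  obtain Bb where Bb: "Bb \<subseteq> B" "independent Bb" "B \<subseteq> span Bb" "card Bb = dim B"
    by (rule basis_exists)
  have span_Bb: "span Bb = B" by (rule span_subspace[OF Bb(1) Bb(3) B])
  have "finite Bb" using Bb(1,2) BZ ZW independent_span_bound[OF W] by blast
  have z1_Bb: "z1 \<notin> span Bb" using z1(2) span_Bb by simp
  have z2_Bb: "z2 \<notin> span (insert z1 Bb)"
    unfolding span_breakdown_eq span_Bb using z2(2) by blast
  have indep: "independent (insert z2 (insert z1 Bb))"
    by (intro independent_insertI z2_Bb independent_insertI[OF z1_Bb Bb(2)])
  obtain Bz where Bz: "Bz \<subseteq> Z" "independent Bz" "Z \<subseteq> span Bz" "card Bz = dim Z"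
    by (rule basis_exists)
  have "finite Bz" using Bz(1,2) ZW independent_span_bound[OF W] by blast
  moreover have "insert z2 (insert z1 Bb) \<subseteq> span Bz" using Bz(3) z1(1) z2(1) Bb(1) BZ by blast
  ultimately have "card (insert z2 (insert z1 Bb)) \<le> dim Z"
    using independent_span_bound[OF _ indep] Bz(4) by metis
  moreover have "z1 \<notin> Bb" "z2 \<notin> insert z1 Bb" using z1_Bb z2_Bb span_base by blast+
  ultimately show ?thesis using \<open>finite Bb\<close> Bb(4) by simp
qed

text \<open>The sign \<open>(-1)^w\<close> is that of \<open>x\<^sub>w e\<^bsub>{0,1,2}-{w}\<^esub>\<close> in the Koszul differential of
  \<open>e\<^bsub>{0,1,2}\<^esub>\<close>, so a boundary of this shape yields a sign-free socle relation.\<close>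

definition socle_chain :: "'k::comm_ring_1 poly3 \<Rightarrow> (nat \<Rightarrow> 'k) \<Rightarrow> nat set \<Rightarrow> 'k poly3" where
  "socle_chain s \<gamma> T = (\<Sum>w<3. if T = {0,1,2} - {w} then const3 ((-1) ^ w * \<gamma> w) * s else 0)"

lemma complement_singleton_012_inj:
  "{0,1,2} - {w} = {0,1,2} - {w'} \<Longrightarrow> w < 3 \<Longrightarrow> w = (w' :: nat)"
proof (rule ccontr)
  assume eq: "{0,1,2} - {w} = {0,1,2} - {w'}" and "w < 3" "w \<noteq> w'"
  then have "w \<in> {0,1,2} - {w'}" by (simp add: eval_nat_numeral less_Suc_eq)
  then show False unfolding eq[symmetric] by blast
qed

lemma socle_chain_complement:
  assumes "w < 3"
  shows "socle_chain s \<gamma> ({0,1,2} - {w}) = const3 ((-1) ^ w * \<gamma> w) * s"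
proof -
  have "socle_chain s \<gamma> ({0,1,2} - {w}) = (\<Sum>w'<3. if w' = w then const3 ((-1) ^ w' * \<gamma> w') * s else 0)"
    unfolding socle_chain_def using assms
    by (intro sum.cong refl) (metis complement_singleton_012_inj)
  then show ?thesis using assms by simp
qed

lemma socle_chain_support:
  assumes "socle_chain s \<gamma> T \<noteq> 0"
  shows "T \<subseteq> {0,1,2} \<and> card T = 2"
proof -
  obtain w where "w < 3" "T = {0,1,2} - {w}"
    using assms unfolding socle_chain_def
    by (elim sum.not_neutral_contains_not_neutral) (simp split: if_splits)
  moreover have "w \<in> {0,1,2}" using \<open>w < 3\<close> by (simp add: eval_nat_numeral less_Suc_eq)
  ultimately show ?thesis by (simp add: card_Diff_singleton)
qed

lemma socle_chain_in_kcycles: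
  assumes I: "is_ideal I" and socle: "\<And>u. var3 u * s \<in> I" and s: "homog (j - 2) s"
  shows "socle_chain s \<gamma> \<in> kcycles I 2 j"
proof -
  have "homog (j - int 2) (socle_chain s \<gamma> T)" for T
    unfolding socle_chain_def using s by (auto intro!: homog_sum homog_const3_mult homog_zero)
  then have "socle_chain s \<gamma> \<in> kchains 2 j"
    unfolding kchains_def using socle_chain_support by blast
  moreover have "var3 u * socle_chain s \<gamma> T \<in> I" for u T
  proof -
    have "var3 u * (if P then const3 c * s else 0) \<in> I" for P c
      using ideal_mult[OF I socle, of "const3 c" u] ideal_zero[OF I] by (simp add: mult.left_commute)
    then show ?thesis
      unfolding socle_chain_def sum_distrib_left by (intro ideal_sum[OF I])
  qed
  then have "kdiff 1 (socle_chain s \<gamma>) T \<in> I" for T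
    by (rule kdiff_in_ideal[OF I])
  ultimately show ?thesis
    unfolding kcycles_def by simp
qed

lemma socle_chain_diff_cscale:
  "socle_chain s (\<lambda>x. \<gamma> x - c * \<gamma>' x) = socle_chain s \<gamma> - cscale c (socle_chain s \<gamma>')"
proof
  fix T
  show "socle_chain s (\<lambda>x. \<gamma> x - c * \<gamma>' x) T = (socle_chain s \<gamma> - cscale c (socle_chain s \<gamma>')) T"
    unfolding socle_chain_def cscale_def fun_diff_def sum_distrib_left sum_subtractf[symmetric]
    by (intro sum.cong refl) (simp add: const3_diff const3_mult algebra_simps)
qed

lemma socle_relation_if_socle_chain_kbounds:
  assumes I: "is_ideal I" and "socle_chain s \<gamma> \<in> kbounds I 2 j"
  shows "socle_relation I s \<gamma>"
proof -
  obtain b where b: "\<And>T. socle_chain s \<gamma> T - kdiff 2 b T \<in> I"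
    using assms(2) unfolding kbounds_def by blast
  have "const3 (\<gamma> w) * s - var3 w * b {0,1,2} \<in> I" if "w < 3" for w
  proof -
    have "socle_chain s \<gamma> ({0,1,2} - {w}) - kdiff 2 b ({0,1,2} - {w})
        = (-1) ^ w * (const3 (\<gamma> w) * s - var3 w * b {0,1,2})"
      unfolding socle_chain_complement[OF that] kdiff_2_complement[OF that]
      by (simp add: const3_mult const3_power const3_uminus algebra_simps)
    then have "(-1) ^ w * ((-1) ^ w * (const3 (\<gamma> w) * s - var3 w * b {0,1,2})) \<in> I"
      using ideal_mult[OF I b] by metis
    then show ?thesis by simp
  qed
  then show ?thesis unfolding socle_relation_def by blast
qed

lemma two_le_betti_2:
  fixes I :: "'k::field poly3 set"
  assumes I: "is_ideal I" and socle: "\<And>u. var3 u * s \<in> I" and s: "homog (j - 2) s"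
    and "u < 3" and vanish: "\<And>\<gamma>. socle_relation I s \<gamma> \<Longrightarrow> \<gamma> u = 0 \<Longrightarrow> \<forall>w<3. \<gamma> w = 0"
  shows "2 \<le> betti I 2 j"
proof -
  define v w :: nat where "v = (if u = 0 then 1 else 0)" and "w = (if u = 2 then 1 else 2)"
  have vw: "v < 3" "w < 3" "v \<noteq> u" "w \<noteq> u" "v \<noteq> w"
    using \<open>u < 3\<close> unfolding v_def w_def by auto
  define \<delta> :: "nat \<Rightarrow> nat \<Rightarrow> 'k" where "\<delta> a x = (if x = a then 1 else 0)" for a x
  have not_bound: "socle_chain s \<gamma> \<notin> kbounds I 2 j" if "\<gamma> u = 0" "\<gamma> t \<noteq> 0" "t < 3" for \<gamma> t
    using vanish[OF socle_relation_if_socle_chain_kbounds[OF I]] that by blast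
  have "socle_chain s (\<delta> w) - cscale c (socle_chain s (\<delta> v)) \<notin> kbounds I 2 j" for c
    unfolding socle_chain_diff_cscale[symmetric] using vw by (intro not_bound[of _ w]) (auto simp: \<delta>_def)
  moreover have "socle_chain s (\<delta> v) \<notin> kbounds I 2 j"
    using vw by (intro not_bound[of _ v]) (auto simp: \<delta>_def)
  moreover obtain W where W: "finite W" "(kchains 2 j :: (nat set \<Rightarrow> 'k poly3) set) \<subseteq> cs.span W"
    using kchains_finite_span by blast
  then have "kcycles I 2 j \<subseteq> cs.span W" unfolding kcycles_def by blast
  ultimately have "cs.dim (kbounds I 2 j) + 2 \<le> cs.dim (kcycles I 2 j)"
    using socle_chain_in_kcycles[OF I socle s]
    by (intro cs.dim_add_two_le[OF kbounds_subspace[OF I] kbounds_subset_kcycles[OF I] _ W(1)]) auto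
  then show ?thesis unfolding betti_def by simp
qed

theorem lemmaA6:
  fixes I :: "'k::field poly3 set" and f l s :: "'k poly3" and n :: nat
  assumes "homog_ideal I" and "m_primary I"
    and "minimal_generator I f" and "homog (int n) f"
    and "homog 1 l" and "socle_generator I s"
    and "f = l * s"
  shows "betti I 2 (int n + 1) \<ge> 2"
proof -
  have I: "is_ideal I" using assms(1) unfolding homog_ideal_def by blast
  obtain J where J: "is_ideal J" and I_to_J: "\<And>u i. i \<in> I \<Longrightarrow> homog_part n (var3 u * i) \<in> J"
    and "f \<notin> J"
    using minimal_generator_separating_ideal[OF assms(3,4)] by blast
  then have ls: "homog_part n (l * s) \<notin> J" using homog_part_homog[OF assms(4)] assms(7) by simp
  have "l * s \<noteq> 0" using ls ideal_zero[OF J] by auto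
  from homog_right_factor[OF this assms(5) socle_generatorD(2)[OF assms(6)]] assms(4,7)
  have s_degree: "homog (int n + 1 - 2) s" by simp
  note proportional = socle_relations_proportional[where I = I, OF J I_to_J assms(5) ls]
  have "\<exists>u\<in>{..<3}. \<forall>\<gamma>\<in>Collect (socle_relation I s). \<gamma> u = 0 \<longrightarrow> (\<forall>w\<in>{..<3}. \<gamma> w = 0)"
    by (rule pairwise_proportional_vanishing_coordinate) (auto intro: proportional simp: lessThan_empty_iff)
  then obtain u where "u < 3" and vanish: "\<And>\<gamma>. socle_relation I s \<gamma> \<Longrightarrow> \<gamma> u = 0 \<Longrightarrow> \<forall>w<3. \<gamma> w = 0"
    by auto
  show ?thesis
    by (rule two_le_betti_2[OF I socle_generatorD(1)[OF assms(6)] s_degree \<open>u < 3\<close> vanish])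
qed

end
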